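(* Let $n\ge 0$ and $i,j\ge -1$ be integers with $i+j=n-1$, and let $p\in\Gamma_n$ be written as a concatenation $p=c\,q_2\,b\,q_1\,a$ of paths with $q_1\in\Gamma_i$ and $q_2\in\Gamma_j$. If $i$ is odd then $a$ is trivial, and if $j$ is odd then $c$ is trivial. In particular, if $i$ and $j$ are both odd, then the only such decomposition of $p$ is $p=\sigma_j(p)\,b\,\pi_i(p)$.
   Context: Let $\Bbbk$ be a field, $Q=(Q_0,Q_1,s,t)$ a finite quiver, and $A=\Bbbk Q/I$ a finite-dimensional monomial algebra, i.e. $I$ is an ideal generated by paths of length at least $2$. Paths are written from right to left: a path is $p=\alpha_n\cdots\alpha_1$ with arrows $\alpha_i$ and $t(\alpha_i)=s(\alpha_{i+1})$; vertices are the paths of length $0$ (trivial paths); $qp$ denotes concatenation when $t(p)=s(q)$. Let $\mathcal B$ be the set of paths not lying in $I$. If $p=bqa$ for paths $a,b,q$, then $q$ is a divisor of $p$; if $b$ is trivial, $q$ is a suffix; if $a$ is trivial, $q$ is a prefix; proper means $q\neq p$. For $n\ge -1$, a left $n$-ambiguity is a path $p$ with a decomposition $p=u_{-1}u_0u_1\cdots u_n$ such that $u_{-1}\in Q_0$, $u_0\in Q_1$, $u_i\in\mathcal B$ for all $i$, and for every $0\le i\le n-1$, $u_iu_{i+1}\in I$ while no proper suffix of $u_iu_{i+1}$ lies in $I$ (one writes $p=u_0\cdots u_n$). A right $n$-ambiguity is a path with a decomposition $p=v_n\cdots v_0v_{-1}$ with $v_{-1}\in Q_0$, $v_0\in Q_1$,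 $v_i\in\mathcal B$, and for $0\le i\le n-1$, $v_{i+1}v_i\in I$ while no proper prefix of $v_{i+1}v_i$ lies in $I$. A path is a left $n$-ambiguity iff it is a right $n$-ambiguity; such paths are called $n$-ambiguities, and $\Gamma_n$ denotes their set. Both decompositions of an $n$-ambiguity are unique. For $p\in\Gamma_n$ with left decomposition $u_0\cdots u_n$ and right decomposition $v_n\cdots v_0$, and $-1\le m\le n$, set $\sigma_m(p):=u_0\cdots u_m$ (a suffix of $p$ which is an $m$-ambiguity) and $\pi_m(p):=v_m\cdots v_0$ (a prefix of $p$ which is an $m$-ambiguity). *)

theory Defs
  imports Main
begin

record ('v, 'a) quiver =
  verts :: "'v set"
  arrs  :: "'a set"
  qs    :: "'a \<Rightarrow> 'v"
  qt    :: "'a \<Rightarrow> 'v"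

text \<open>A path is a pair (starting vertex, arrows in order of traversal).
  The path written alpha_n ... alpha_1 is (s alpha_1, [alpha_1, ..., alpha_n]);
  the trivial path at v is (v, []).\<close>
type_synonym ('v, 'a) path = "'v \<times> 'a list"

definition is_path :: "('v, 'a) quiver \<Rightarrow> ('v, 'a) path \<Rightarrow> bool" where
  "is_path Q p \<longleftrightarrow> fst p \<in> verts Q \<and> set (snd p) \<subseteq> arrs Q \<and>
     (snd p \<noteq> [] \<longrightarrow> qs Q (hd (snd p)) = fst p) \<and>
     (\<forall>k. Suc k < length (snd p) \<longrightarrow> qt Q (snd p ! k) = qs Q (snd p ! Suc k))"

definition psrc :: "('v, 'a) path \<Rightarrow> 'v" where
  "psrc p = fst p"

definition ptgt :: "('v, 'a) quiver \<Rightarrow> ('v, 'a) path \<Rightarrow> 'v" where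
  "ptgt Q p = (if snd p = [] then fst p else qt Q (last (snd p)))"

text \<open>Concatenation: pcat q p is the path written qp (first p, then q).\<close>
definition pcat :: "('v, 'a) path \<Rightarrow> ('v, 'a) path \<Rightarrow> ('v, 'a) path" where
  "pcat q p = (fst p, snd p @ snd q)"

text \<open>decomp Q p [x1, ..., xk]: p is the (well-defined) concatenation x1 x2 ... xk
  of paths x1, ..., xk, written right to left (xk is traversed first).\<close>
fun decomp :: "('v, 'a) quiver \<Rightarrow> ('v, 'a) path \<Rightarrow> ('v, 'a) path list \<Rightarrow> bool" where
  "decomp Q p [] = False"
| "decomp Q p [x] = (is_path Q x \<and> p = x)"
| "decomp Q p (x # y # rest) =
     (\<exists>r. decomp Q r (y # rest) \<and> is_path Q x \<and> ptgt Q r = psrc x \<and> p = pcat x r)"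

definition divisor :: "('v, 'a) quiver \<Rightarrow> ('v, 'a) path \<Rightarrow> ('v, 'a) path \<Rightarrow> bool" where
  "divisor Q q p \<longleftrightarrow> (\<exists>a b. decomp Q p [b, q, a])"

definition suffix :: "('v, 'a) quiver \<Rightarrow> ('v, 'a) path \<Rightarrow> ('v, 'a) path \<Rightarrow> bool" where
  "suffix Q q p \<longleftrightarrow> (\<exists>a. decomp Q p [q, a])"

definition prefix :: "('v, 'a) quiver \<Rightarrow> ('v, 'a) path \<Rightarrow> ('v, 'a) path \<Rightarrow> bool" where
  "prefix Q q p \<longleftrightarrow> (\<exists>b. decomp Q p [b, q])"

text \<open>The monomial ideal I generated by the set of paths R: a path lies in I iff
  it has a divisor in R.\<close>
definition in_I :: "('v, 'a) quiver \<Rightarrow> ('v, 'a) path set \<Rightarrow> ('v, 'a) path \<Rightarrow> bool" where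
  "in_I Q R p \<longleftrightarrow> is_path Q p \<and> (\<exists>r\<in>R. divisor Q r p)"

definition Bset :: "('v, 'a) quiver \<Rightarrow> ('v, 'a) path set \<Rightarrow> ('v, 'a) path set" where
  "Bset Q R = {p. is_path Q p \<and> \<not> in_I Q R p}"

text \<open>Standing assumptions: finite quiver, I generated by paths of length at least 2,
  and A = kQ/I finite-dimensional (finitely many paths outside I).\<close>
definition monomial_alg :: "('v, 'a) quiver \<Rightarrow> ('v, 'a) path set \<Rightarrow> bool" where
  "monomial_alg Q R \<longleftrightarrow> finite (verts Q) \<and> finite (arrs Q) \<and>
     (\<forall>\<alpha>\<in>arrs Q. qs Q \<alpha> \<in> verts Q \<and> qt Q \<alpha> \<in> verts Q) \<and>
     (\<forall>r\<in>R. is_path Q r \<and> length (snd r) \<ge> 2) \<and>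
     finite (Bset Q R)"

text \<open>Left decomposition p = u_{-1} u_0 u_1 ... u_n with u_{-1} = (w, []) and
  us = [u_0, ..., u_n].\<close>
definition left_dec :: "('v, 'a) quiver \<Rightarrow> ('v, 'a) path set \<Rightarrow> int \<Rightarrow> ('v, 'a) path
    \<Rightarrow> 'v \<Rightarrow> ('v, 'a) path list \<Rightarrow> bool" where
  "left_dec Q R n p w us \<longleftrightarrow> n \<ge> -1 \<and> length us = nat (n + 1) \<and>
     decomp Q p ((w, []) # us) \<and>
     (us \<noteq> [] \<longrightarrow> length (snd (us ! 0)) = 1) \<and>
     (\<forall>u\<in>set us. u \<in> Bset Q R) \<and>
     (\<forall>i. Suc i < length us \<longrightarrow>
        in_I Q R (pcat (us ! i) (us ! Suc i)) \<and>
        (\<forall>q. suffix Q q (pcat (us ! i) (us ! Suc i)) \<and> q \<noteq> pcat (us ! i) (us ! Suc i)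
              \<longrightarrow> \<not> in_I Q R q))"

text \<open>Right decomposition p = v_n ... v_0 v_{-1} with v_{-1} = (w, []) and
  vs = [v_0, ..., v_n].\<close>
definition right_dec :: "('v, 'a) quiver \<Rightarrow> ('v, 'a) path set \<Rightarrow> int \<Rightarrow> ('v, 'a) path
    \<Rightarrow> 'v \<Rightarrow> ('v, 'a) path list \<Rightarrow> bool" where
  "right_dec Q R n p w vs \<longleftrightarrow> n \<ge> -1 \<and> length vs = nat (n + 1) \<and>
     decomp Q p (rev vs @ [(w, [])]) \<and>
     (vs \<noteq> [] \<longrightarrow> length (snd (vs ! 0)) = 1) \<and>
     (\<forall>v\<in>set vs. v \<in> Bset Q R) \<and>
     (\<forall>i. Suc i < length vs \<longrightarrow>
        in_I Q R (pcat (vs ! Suc i) (vs ! i)) \<and>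
        (\<forall>q. prefix Q q (pcat (vs ! Suc i) (vs ! i)) \<and> q \<noteq> pcat (vs ! Suc i) (vs ! i)
              \<longrightarrow> \<not> in_I Q R q))"

definition left_amb :: "('v, 'a) quiver \<Rightarrow> ('v, 'a) path set \<Rightarrow> int \<Rightarrow> ('v, 'a) path \<Rightarrow> bool" where
  "left_amb Q R n p \<longleftrightarrow> (\<exists>w us. left_dec Q R n p w us)"

definition right_amb :: "('v, 'a) quiver \<Rightarrow> ('v, 'a) path set \<Rightarrow> int \<Rightarrow> ('v, 'a) path \<Rightarrow> bool" where
  "right_amb Q R n p \<longleftrightarrow> (\<exists>w vs. right_dec Q R n p w vs)"

text \<open>Gamma_n: the n-ambiguities (left n-ambiguities; by the paper these coincide with
  the right n-ambiguities).\<close>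
definition Gamma :: "('v, 'a) quiver \<Rightarrow> ('v, 'a) path set \<Rightarrow> int \<Rightarrow> ('v, 'a) path set" where
  "Gamma Q R n = {p. left_amb Q R n p}"

text \<open>sigma_m(p) = u_{-1} u_0 ... u_m (u_{-1} trivial), pi_m(p) = v_m ... v_0 v_{-1}.\<close>
definition sigma :: "('v, 'a) quiver \<Rightarrow> ('v, 'a) path set \<Rightarrow> int \<Rightarrow> int \<Rightarrow> ('v, 'a) path
    \<Rightarrow> ('v, 'a) path" where
  "sigma Q R n m p = (THE q. \<exists>w us. left_dec Q R n p w us \<and>
      decomp Q q ((w, []) # take (nat (m + 1)) us))"

definition pi_amb :: "('v, 'a) quiver \<Rightarrow> ('v, 'a) path set \<Rightarrow> int \<Rightarrow> int \<Rightarrow> ('v, 'a) path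
    \<Rightarrow> ('v, 'a) path" where
  "pi_amb Q R n m p = (THE q. \<exists>w vs. right_dec Q R n p w vs \<and>
      decomp Q q (rev (take (nat (m + 1)) vs) @ [(w, [])]))"

end

theory Submission
  imports Defs
begin

text \<open>All the work happens on arrow words, with \<open>B\<close> the property of containing a relation;
  \<open>B\<close> is inherited by superwords. The right decomposition of an ambiguity is forced greedily:
  after cuts at \<open>0\<close> and \<open>1\<close>, each cut point \<open>e (k + 2)\<close> is the end of the shortest \<open>B\<close>-factor
  starting at \<open>e k\<close>, and \<open>p \<in> \<Gamma>\<^sub>n\<close> means that this leapfrog sequence reaches the end of the word
  after exactly \<open>n + 1\<close> steps. A left decomposition is the same for the reversed word, and a
  Galois correspondence between the two closing maps shows that both readings agree.

  Now let \<open>p = c q\<^sub>2 b q\<^sub>1 a\<close>. The closing map is monotone, so if \<open>a\<close> were nontrivial the cut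
  points of \<open>p\<close> would stay ahead of those of \<open>q\<^sub>1\<close> and then of \<open>q\<^sub>2\<close>; when \<open>i + 1\<close> is even the
  parities line up so that they overshoot the end of \<open>p\<close>. Reversing the word gives the same for
  \<open>c\<close>. With \<open>a\<close> and \<open>c\<close> trivial, \<open>q\<^sub>1\<close> consists of the first \<open>i + 1\<close> greedy pieces of \<open>p\<close> read
  forwards and \<open>q\<^sub>2\<close> of the first \<open>j + 1\<close> pieces read backwards, which are \<open>\<pi>\<^sub>i(p)\<close> and
  \<open>\<sigma>\<^sub>j(p)\<close>.\<close>

section \<open>Factors of words\<close>

definition slice :: "'a list \<Rightarrow> nat \<Rightarrow> nat \<Rightarrow> 'a list" where
  "slice W x y = take (y - x) (drop x W)"

lemma length_slice: "length (slice W x y) = min (y - x) (length W - x)"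
  by (simp add: slice_def)

lemma slice_0: "slice W 0 y = take y W"
  by (simp add: slice_def)

lemma slice_empty: "y \<le> x \<Longrightarrow> slice W x y = []"
  by (simp add: slice_def)

lemma slice_append: "x \<le> y \<Longrightarrow> y \<le> z \<Longrightarrow> slice W x y @ slice W y z = slice W x z"
proof -
  assume "x \<le> y" "y \<le> z"
  then have "z - x = (y - x) + (z - y)" and "drop (y - x) (drop x W) = drop y W" by simp_all
  then show ?thesis unfolding slice_def by (metis take_add)
qed

lemma slice_take: "y \<le> y' \<Longrightarrow> slice W x y = take (y - x) (slice W x y')"
  by (simp add: slice_def min_def)

lemma slice_slice: "y \<le> \<beta> - \<alpha> \<Longrightarrow> slice (slice W \<alpha> \<beta>) x y = slice W (\<alpha> + x) (\<alpha> + y)"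
  unfolding slice_def by (simp add: drop_take min_def add.commute)

lemma slice_rev: "y \<le> length W \<Longrightarrow> slice (rev W) x y = rev (slice W (length W - y) (length W - x))"
proof (cases "x \<le> y")
  case True
  assume y: "y \<le> length W"
  have "slice (rev W) x y = take (y - x) (rev (take (length W - x) W))"
    unfolding slice_def by (simp add: drop_rev)
  also have "\<dots> = rev (drop (length W - y) (take (length W - x) W))"
    using True y by (simp add: take_rev)
  finally show ?thesis unfolding slice_def by (simp add: drop_take)
qed (simp add: slice_def)

lemma slice_within: "x' \<le> x \<Longrightarrow> y \<le> y' \<Longrightarrow> \<exists>u v. slice W x' y' = u @ slice W x y @ v"
proof (cases "x \<le> y")
  case True
  assume "x' \<le> x" "y \<le> y'"
  then have "slice W x' y' = slice W x' x @ slice W x y @ slice W y y'"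
    using True by (simp add: slice_append)
  then show ?thesis by blast
qed (auto simp: slice_def)

definition superword_closed :: "('a list \<Rightarrow> bool) \<Rightarrow> bool" where
  "superword_closed B \<longleftrightarrow> (\<forall>u x v. B x \<longrightarrow> B (u @ x @ v)) \<and> \<not> B []"

lemma superword_closed_slice:
  "superword_closed B \<Longrightarrow> B (slice W x y) \<Longrightarrow> x' \<le> x \<Longrightarrow> y \<le> y' \<Longrightarrow> B (slice W x' y')"
  unfolding superword_closed_def by (metis slice_within)

lemma superword_closed_rev: "superword_closed B \<Longrightarrow> superword_closed (\<lambda>w. B (rev w))"
  unfolding superword_closed_def by (metis rev_append rev_is_Nil_conv append_assoc)

section \<open>Greedy cut points\<close>

text \<open>\<open>Suc (length W)\<close> signals that no factor starting at \<open>x\<close> has property \<open>B\<close>.\<close>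

definition closing_pos :: "('a list \<Rightarrow> bool) \<Rightarrow> 'a list \<Rightarrow> nat \<Rightarrow> nat" where
  "closing_pos B W x =
     (if B (slice W x (length W)) then LEAST y. B (slice W x y) else Suc (length W))"

lemma closing_pos_le_iff:
  assumes "superword_closed B" "y \<le> length W"
  shows "closing_pos B W x \<le> y \<longleftrightarrow> B (slice W x y)"
proof
  assume "B (slice W x y)"
  moreover from this have "B (slice W x (length W))"
    using superword_closed_slice[OF assms(1)] assms(2) by blast
  ultimately show "closing_pos B W x \<le> y"
    unfolding closing_pos_def by (simp add: Least_le)
next
  assume le: "closing_pos B W x \<le> y"
  then have "B (slice W x (length W))"
    using assms(2) unfolding closing_pos_def by (auto split: if_splits)
  then have "B (slice W x (LEAST y. B (slice W x y)))"
    by (rule LeastI)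
  with \<open>B (slice W x (length W))\<close> have "B (slice W x (closing_pos B W x))"
    unfolding closing_pos_def by simp
  then show "B (slice W x y)"
    using superword_closed_slice[OF assms(1)] le by blast
qed

lemma closing_pos_le_Suc_length: "closing_pos B W x \<le> Suc (length W)"
  unfolding closing_pos_def by (auto intro: Least_le le_SucI)

lemma mono_closing_pos:
  assumes "superword_closed B"
  shows "mono (closing_pos B W)"
proof
  fix x x' :: nat assume "x \<le> x'"
  show "closing_pos B W x \<le> closing_pos B W x'"
  proof (cases "closing_pos B W x' \<le> length W")
    case True
    then have "B (slice W x' (closing_pos B W x'))"
      using closing_pos_le_iff[OF assms True, of x'] by simp
    then have "B (slice W x (closing_pos B W x'))"
      using superword_closed_slice[OF assms] \<open>x \<le> x'\<close> by blast
    then show ?thesis using closing_pos_le_iff[OF assms True] by simp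
  next
    case False
    then show ?thesis using closing_pos_le_Suc_length[of B W x] by simp
  qed
qed

lemma less_closing_pos:
  assumes "superword_closed B" "x \<le> length W"
  shows "x < closing_pos B W x"
proof (rule ccontr)
  assume "\<not> x < closing_pos B W x"
  then have "B (slice W x x)"
    using closing_pos_le_iff[OF assms, of x] by simp
  then show False
    using assms(1) by (simp add: slice_empty superword_closed_def)
qed

lemma slice_to_closing_pos:
  assumes B: "superword_closed B" and le: "closing_pos B W x \<le> length W"
  shows "B (slice W x (closing_pos B W x))"
    and "z < length (slice W x (closing_pos B W x)) \<Longrightarrow>
         \<not> B (take z (slice W x (closing_pos B W x)))"
proof -
  show "B (slice W x (closing_pos B W x))"
    using closing_pos_le_iff[OF B le, of x] by simp
  assume "z < length (slice W x (closing_pos B W x))"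
  then have "x + z < closing_pos B W x" "x + z \<le> length W"
    using le by (auto simp: length_slice)
  moreover from this have "take z (slice W x (closing_pos B W x)) = slice W x (x + z)"
    using slice_take[of "x + z" "closing_pos B W x" W x] by simp
  ultimately show "\<not> B (take z (slice W x (closing_pos B W x)))"
    using closing_pos_le_iff[OF B, of "x + z" W x] by simp
qed

text \<open>Both sides say that the factor of \<open>W\<close> between \<open>y\<close> and \<open>x\<close> has property \<open>B\<close>.\<close>

lemma closing_pos_rev_galois:
  assumes "superword_closed B" "x \<le> length W" "y \<le> length W"
  shows "closing_pos B W y \<le> x \<longleftrightarrow>
         closing_pos (\<lambda>w. B (rev w)) (rev W) (length W - x) \<le> length W - y"
proof -
  have "closing_pos (\<lambda>w. B (rev w)) (rev W) (length W - x) \<le> length W - y \<longleftrightarrow>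
        B (rev (slice (rev W) (length W - x) (length W - y)))"
    using closing_pos_le_iff[OF superword_closed_rev[OF assms(1)], of "length W - y" "rev W"]
    by simp
  also have "rev (slice (rev W) (length W - x) (length W - y)) = slice W y x"
    using slice_rev[of "length W - y" W "length W - x"] assms by simp
  finally show ?thesis using closing_pos_le_iff[OF assms(1,2)] by simp
qed

lemma closing_pos_slice:
  assumes B: "superword_closed B" and "\<alpha> \<le> \<beta>" "\<beta> \<le> length W" "y \<le> \<beta> - \<alpha>"
    and inside: "closing_pos B (slice W \<alpha> \<beta>) y \<le> \<beta> - \<alpha>"
  shows "closing_pos B W (\<alpha> + y) = \<alpha> + closing_pos B (slice W \<alpha> \<beta>) y"
proof -
  define X where "X = slice W \<alpha> \<beta>"
  have le_iff: "closing_pos B X y \<le> x \<longleftrightarrow> closing_pos B W (\<alpha> + y) \<le> \<alpha> + x"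
    if "x \<le> \<beta> - \<alpha>" for x
  proof -
    have "closing_pos B X y \<le> x \<longleftrightarrow> B (slice X y x)"
      using closing_pos_le_iff[OF B, of x X y] that assms(2,3) by (simp add: X_def length_slice)
    also have "slice X y x = slice W (\<alpha> + y) (\<alpha> + x)"
      unfolding X_def using slice_slice that by blast
    also have "B \<dots> \<longleftrightarrow> closing_pos B W (\<alpha> + y) \<le> \<alpha> + x"
      using closing_pos_le_iff[OF B, of "\<alpha> + x" W "\<alpha> + y"] that assms(2,3) by simp
    finally show ?thesis .
  qed
  define c where "c = closing_pos B W (\<alpha> + y)"
  have "\<alpha> + y < c"
    unfolding c_def using less_closing_pos[OF B] assms(2-4) by simp
  have "c \<le> \<alpha> + closing_pos B X y"
    using le_iff[OF inside[folded X_def]] by (simp add: c_def)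
  moreover have "\<not> c < \<alpha> + closing_pos B X y"
  proof
    assume less: "c < \<alpha> + closing_pos B X y"
    then have "c - \<alpha> \<le> \<beta> - \<alpha>" and c: "c = \<alpha> + (c - \<alpha>)"
      using inside \<open>\<alpha> + y < c\<close> by (auto simp: X_def)
    then have "closing_pos B X y \<le> c - \<alpha>"
      using le_iff[of "c - \<alpha>"] by (simp add: c_def)
    then show False
      using less c by linarith
  qed
  ultimately show ?thesis
    unfolding X_def c_def by simp
qed

fun leapfrog :: "(nat \<Rightarrow> nat) \<Rightarrow> nat \<Rightarrow> nat \<Rightarrow> nat \<Rightarrow> nat" where
  "leapfrog f a b 0 = a"
| "leapfrog f a b (Suc 0) = b"
| "leapfrog f a b (Suc (Suc k)) = f (leapfrog f a b k)"

lemma leapfrog_shift_mono: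
  assumes "mono f" "leapfrog f a b r \<le> leapfrog f a' b' r'"
  shows "leapfrog f a b (r + 2 * t) \<le> leapfrog f a' b' (r' + 2 * t)"
proof (induction t)
  case (Suc t)
  then show ?case
    using monoD[OF assms(1)] by (simp add: add.assoc[symmetric])
qed (use assms in simp)

abbreviation cuts :: "('a list \<Rightarrow> bool) \<Rightarrow> 'a list \<Rightarrow> nat \<Rightarrow> nat" where
  "cuts B W \<equiv> leapfrog (closing_pos B W) 0 1"

section \<open>Ambiguous words\<close>

text \<open>The word form of an ambiguity with \<open>N\<close> pieces. Its cut points are \<open>0, 1\<close> and then
  greedily \<open>e (k + 2) = closing_pos B W (e k)\<close>; the \<open>N\<close>-th one must be the end of \<open>W\<close>, and
  strict increase at \<open>k = N\<close> says that the last piece contains no \<open>B\<close>-factor.\<close>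

definition amb_word :: "('a list \<Rightarrow> bool) \<Rightarrow> 'a list \<Rightarrow> nat \<Rightarrow> bool" where
  "amb_word B W N \<longleftrightarrow> (N = 0 \<and> W = []) \<or>
     (0 < N \<and> cuts B W N = length W \<and> (\<forall>k\<le>N. cuts B W k < cuts B W (Suc k)))"

lemma amb_word_cuts:
  assumes "amb_word B W N" "0 < N"
  shows "cuts B W N = length W"
    and "k \<le> N \<Longrightarrow> cuts B W k < cuts B W (Suc k)"
    and "k \<le> N \<Longrightarrow> cuts B W k \<le> length W"
proof -
  show last: "cuts B W N = length W" and inc: "k \<le> N \<Longrightarrow> cuts B W k < cuts B W (Suc k)" for k
    using assms unfolding amb_word_def by auto
  show "k \<le> N \<Longrightarrow> cuts B W k \<le> length W"
    using lift_Suc_mono_le_ivl[of "{..N}" "cuts B W" k N] inc last by fastforce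
qed

text \<open>The arrow words \<open>[v\<^sub>0, \<dots>, v\<^sub>n]\<close> of a right decomposition \<open>v\<^sub>n \<cdots> v\<^sub>0\<close>.\<close>

definition amb_factorization :: "('a list \<Rightarrow> bool) \<Rightarrow> 'a list list \<Rightarrow> bool" where
  "amb_factorization B ws \<longleftrightarrow>
     (ws \<noteq> [] \<longrightarrow> length (ws ! 0) = 1) \<and> (\<forall>w\<in>set ws. \<not> B w) \<and>
     (\<forall>k. Suc k < length ws \<longrightarrow> B (ws ! k @ ws ! Suc k) \<and>
        (\<forall>z < length (ws ! k @ ws ! Suc k). \<not> B (take z (ws ! k @ ws ! Suc k))))"

definition cut_pos :: "'a list list \<Rightarrow> nat \<Rightarrow> nat" where
  "cut_pos ws k = length (concat (take k ws))"

lemma take_cut_pos: "take (cut_pos ws k) (concat ws) = concat (take k ws)"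
  unfolding cut_pos_def by (metis append_take_drop_id concat_append append_eq_conv_conj)

lemma cut_pos_length: "cut_pos ws (length ws) = length (concat ws)"
  by (simp add: cut_pos_def)

lemma cut_pos_Suc: "k < length ws \<Longrightarrow> cut_pos ws (Suc k) = cut_pos ws k + length (ws ! k)"
  by (simp add: cut_pos_def take_Suc_conv_app_nth)

lemma cut_pos_mono: "k \<le> m \<Longrightarrow> cut_pos ws k \<le> cut_pos ws m"
  unfolding cut_pos_def
  by (metis append_take_drop_id concat_append le_add1 length_append take_add le_add_diff_inverse)

lemma slice_concat_cut_pos:
  assumes "k \<le> m"
  shows "slice (concat ws) (cut_pos ws k) (cut_pos ws m) = concat (take (m - k) (drop k ws))"
proof -
  have "take m ws = take k ws @ take (m - k) (drop k ws)"
    using assms by (metis le_add_diff_inverse take_add)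
  moreover have "concat ws = concat (take k ws) @ concat (drop k ws)"
    by (metis append_take_drop_id concat_append)
  moreover have "concat (drop k ws) = concat (take (m - k) (drop k ws)) @ concat (drop (m - k) (drop k ws))"
    by (metis append_take_drop_id concat_append)
  ultimately show ?thesis
    unfolding slice_def cut_pos_def by simp
qed

lemma amb_factorization_nonempty:
  assumes "amb_factorization B ws" "superword_closed B" "k < length ws"
  shows "ws ! k \<noteq> []"
proof (cases k)
  case (Suc m)
  then have "B (ws ! m @ ws ! k)" "\<not> B (ws ! m)"
    using assms(1,3) unfolding amb_factorization_def by auto
  then show ?thesis by auto
qed (use assms in \<open>auto simp: amb_factorization_def\<close>)

lemma closing_pos_cut_pos:
  assumes B: "superword_closed B" and ws: "amb_factorization B ws" and k: "k + 2 \<le> length ws"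
  shows "closing_pos B (concat ws) (cut_pos ws k) = cut_pos ws (k + 2)"
proof -
  define X where "X = ws ! k @ ws ! Suc k"
  have "drop k ws = ws ! k # ws ! Suc k # drop (k + 2) ws"
    using k by (simp add: Cons_nth_drop_Suc)
  then have "take 2 (drop k ws) = [ws ! k, ws ! Suc k]"
    by simp
  then have slice_X: "slice (concat ws) (cut_pos ws k) (cut_pos ws (k + 2)) = X"
    using slice_concat_cut_pos[of k "k + 2" ws] by (simp add: X_def)
  have len: "cut_pos ws (k + 2) = cut_pos ws k + length X"
    using cut_pos_Suc[of k ws] cut_pos_Suc[of "Suc k" ws] k by (simp add: X_def)
  have end_le: "cut_pos ws (k + 2) \<le> length (concat ws)"
    using cut_pos_mono[OF k, of ws] by (simp add: cut_pos_length)
  have BX: "B X" and minimal: "\<And>z. z < length X \<Longrightarrow> \<not> B (take z X)"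
    using ws k unfolding amb_factorization_def X_def by auto
  have "closing_pos B (concat ws) (cut_pos ws k) \<le> cut_pos ws (k + 2)"
    using closing_pos_le_iff[OF B end_le] slice_X BX by simp
  moreover have "\<not> closing_pos B (concat ws) (cut_pos ws k) \<le> y" if "y < cut_pos ws (k + 2)" for y
  proof -
    have "slice (concat ws) (cut_pos ws k) y = take (y - cut_pos ws k) X"
      using slice_take[of y "cut_pos ws (k + 2)" "concat ws" "cut_pos ws k"] that slice_X
      by simp
    moreover have "0 < length X"
      using BX B by (auto simp: superword_closed_def)
    then have "y - cut_pos ws k < length X"
      using that len by arith
    ultimately show ?thesis
      using closing_pos_le_iff[OF B, of y] minimal[of "y - cut_pos ws k"] that end_le by simp
  qed
  ultimately show ?thesis
    using le_neq_implies_less by blast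
qed

lemma amb_factorization_cuts:
  assumes "superword_closed B" "amb_factorization B ws"
  shows "k \<le> length ws \<Longrightarrow> cuts B (concat ws) k = cut_pos ws k"
proof (induction k rule: nat_induct2)
  case 0
  then show ?case by (simp add: cut_pos_def)
next
  case 1
  then show ?case
    using assms(2) by (cases ws) (auto simp: amb_factorization_def cut_pos_def)
next
  case (step k)
  then show ?case
    using closing_pos_cut_pos[OF assms] by simp
qed

lemma amb_word_concat:
  assumes B: "superword_closed B" and ws: "amb_factorization B ws"
  shows "amb_word B (concat ws) (length ws)"
proof (cases "ws = []")
  case False
  define N where "N = length ws"
  then obtain m where m: "N = Suc m"
    using False by (cases ws) auto
  have cuts: "\<And>k. k \<le> N \<Longrightarrow> cuts B (concat ws) k = cut_pos ws k"
    using amb_factorization_cuts[OF B ws] N_def by simp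
  have last: "cut_pos ws N = length (concat ws)"
    by (simp add: N_def cut_pos_length)
  have "drop m ws = [ws ! m]"
    using m N_def Cons_nth_drop_Suc[of m ws] by simp
  then have "\<not> B (slice (concat ws) (cut_pos ws m) (cut_pos ws N))"
    using slice_concat_cut_pos[of m N ws] ws m N_def by (simp add: amb_factorization_def)
  then have beyond: "length (concat ws) < cuts B (concat ws) (Suc N)"
    using closing_pos_le_iff[OF B, of "length (concat ws)" "concat ws" "cut_pos ws m"]
      cuts[of m] m last by simp
  have "cuts B (concat ws) k < cuts B (concat ws) (Suc k)" if "k \<le> N" for k
  proof (cases "k = N")
    case True
    then show ?thesis using beyond cuts[of N] last by simp
  next
    case False
    then show ?thesis
      using cut_pos_Suc[of k ws] amb_factorization_nonempty[OF ws B, of k] cuts that N_def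
      by simp
  qed
  then show ?thesis
    unfolding amb_word_def using cuts[of N] last m N_def by simp
qed (simp add: amb_word_def)

lemma concat_slices:
  assumes "\<forall>k<M. e k \<le> e (Suc k)"
  shows "concat (map (\<lambda>k. slice W (e k) (e (Suc k))) [0..<M]) = slice W (e 0) (e M)"
  using assms
proof (induction M)
  case (Suc M)
  have "e 0 \<le> e M"
    by (rule lift_Suc_mono_le_ivl[of "{..<M}"]) (use Suc.prems in auto)
  then show ?case
    using Suc by (simp add: slice_append)
qed (simp add: slice_def)

definition greedy_pieces :: "('a list \<Rightarrow> bool) \<Rightarrow> 'a list \<Rightarrow> nat \<Rightarrow> 'a list list" where
  "greedy_pieces B W N = map (\<lambda>k. slice W (cuts B W k) (cuts B W (Suc k))) [0..<N]"

lemma concat_greedy_pieces: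
  assumes "amb_word B W N"
  shows "concat (greedy_pieces B W N) = W"
proof (cases "N = 0")
  case False
  then show ?thesis
    using concat_slices[of N "cuts B W" W] amb_word_cuts[OF assms]
    by (simp add: greedy_pieces_def less_imp_le slice_def)
qed (use assms in \<open>simp add: amb_word_def greedy_pieces_def\<close>)

lemma amb_factorization_greedy_pieces:
  assumes B: "superword_closed B" and W: "amb_word B W N"
  shows "amb_factorization B (greedy_pieces B W N)"
proof (cases "N = 0")
  case False
  define e where "e = cuts B W"
  define ws where "ws = greedy_pieces B W N"
  have inc: "\<And>k. k \<le> N \<Longrightarrow> e k < e (Suc k)"
    and bounded: "\<And>k. k \<le> N \<Longrightarrow> e k \<le> length W"
    using amb_word_cuts[OF W] False unfolding e_def by auto
  have e_step: "e (k + 2) = closing_pos B W (e k)" for k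
    by (simp add: e_def)
  have piece: "\<And>k. k < N \<Longrightarrow> ws ! k = slice W (e k) (e (Suc k))"
    unfolding ws_def greedy_pieces_def e_def by simp
  have "length (ws ! 0) = 1" if "ws \<noteq> []"
    using piece[of 0] bounded[of 1] False by (simp add: e_def length_slice)
  moreover have "\<not> B (ws ! k)" if "k < N" for k
  proof -
    have "e (Suc k) < closing_pos B W (e k)" "e (Suc k) \<le> length W"
      using inc[of "Suc k"] bounded[of "Suc k"] that e_step[of k] by simp_all
    then show ?thesis
      using closing_pos_le_iff[OF B, of "e (Suc k)" W "e k"] piece that by simp
  qed
  moreover have "B (ws ! k @ ws ! Suc k)"
    and "\<forall>z < length (ws ! k @ ws ! Suc k). \<not> B (take z (ws ! k @ ws ! Suc k))"
    if "Suc k < N" for k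
  proof -
    have "ws ! k @ ws ! Suc k = slice W (e k) (closing_pos B W (e k))"
      using piece that inc[of k] inc[of "Suc k"] e_step[of k]
      by (simp add: slice_append less_imp_le)
    moreover have "closing_pos B W (e k) \<le> length W"
      using bounded[of "k + 2"] that e_step[of k] by simp
    ultimately show "B (ws ! k @ ws ! Suc k)"
      and "\<forall>z < length (ws ! k @ ws ! Suc k). \<not> B (take z (ws ! k @ ws ! Suc k))"
      using slice_to_closing_pos[OF B] by simp_all
  qed
  moreover have "length ws = N"
    by (simp add: ws_def greedy_pieces_def)
  ultimately show ?thesis
    unfolding amb_factorization_def ws_def[symmetric] by (auto simp: in_set_conv_nth)
qed (simp add: amb_factorization_def greedy_pieces_def)

lemma amb_word_factorization:
  assumes "superword_closed B" "amb_word B W N"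
  obtains ws where "concat ws = W" "length ws = N" "amb_factorization B ws"
  using that[of "greedy_pieces B W N"] concat_greedy_pieces[OF assms(2)]
    amb_factorization_greedy_pieces[OF assms] by (simp add: greedy_pieces_def)

text \<open>The forward cut points \<open>e\<close> interleave with the backward ones \<open>c\<close>, counted from the
  other end of the word.\<close>

lemma leapfrog_galois_interleave:
  fixes f g :: "nat \<Rightarrow> nat"
  assumes galois: "\<And>x y. x \<le> L \<Longrightarrow> y \<le> L \<Longrightarrow> f y \<le> x \<longleftrightarrow> g (L - x) \<le> L - y"
    and last: "leapfrog g 0 1 N = L"
    and inc: "\<And>k. k \<le> N \<Longrightarrow> leapfrog g 0 1 k < leapfrog g 0 1 (Suc k)"
  shows "K \<le> N \<Longrightarrow> leapfrog g 0 1 (N - K) + leapfrog f 0 1 K \<le> L \<and>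
                     L < leapfrog g 0 1 (Suc N - K) + leapfrog f 0 1 K"
proof (induction K rule: nat_induct2)
  case 0
  then show ?case using last inc[of N] by simp
next
  case 1
  then show ?case using last inc[of "N - 1"] by simp
next
  case (step K)
  define c where "c = leapfrog g 0 1"
  define e where "e = leapfrog f 0 1"
  have bounded: "c k \<le> L" if "k \<le> N" for k
  proof -
    have "c k \<le> c N"
      by (rule lift_Suc_mono_le_ivl[of "{..<N}"]) (use inc that in \<open>auto simp: c_def less_imp_le\<close>)
    then show ?thesis using last by (simp add: c_def)
  qed
  have IH: "c (N - K) + e K \<le> L" "L < c (Suc N - K) + e K"
    using step by (auto simp: c_def e_def)
  have "N - K = Suc (Suc (N - (K + 2)))" "Suc N - K = Suc (Suc (Suc N - (K + 2)))"
    using step.prems by simp_all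
  then have shift: "c (N - K) = g (c (N - (K + 2)))" "c (Suc N - K) = g (c (Suc N - (K + 2)))"
    unfolding c_def by (metis leapfrog.simps(3))+
  have "f (e K) \<le> L - c (N - (K + 2))"
    using galois[of "L - c (N - (K + 2))" "e K"] bounded[of "N - (K + 2)"] IH shift by simp
  moreover have "\<not> f (e K) \<le> L - c (Suc N - (K + 2))"
    using galois[of "L - c (Suc N - (K + 2))" "e K"] bounded[of "Suc N - (K + 2)"] IH shift
      step.prems by simp
  ultimately show ?case
    using bounded[of "N - (K + 2)"] bounded[of "Suc N - (K + 2)"] step.prems
    by (simp add: c_def e_def) arith
qed

lemma amb_word_of_rev:
  assumes B: "superword_closed B" and rev: "amb_word (\<lambda>w. B (rev w)) (rev W) N"
  shows "amb_word B W N"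
proof (cases "N = 0")
  case True
  then show ?thesis using rev by (simp add: amb_word_def)
next
  case False
  define L where "L = length W"
  define c where "c = cuts (\<lambda>w. B (rev w)) (rev W)"
  define e where "e = cuts B W"
  have c_last: "c N = L" and c_inc: "\<And>k. k \<le> N \<Longrightarrow> c k < c (Suc k)"
    using amb_word_cuts[OF rev] False by (simp_all add: c_def L_def)
  have galois: "\<And>x y. x \<le> L \<Longrightarrow> y \<le> L \<Longrightarrow> closing_pos B W y \<le> x \<longleftrightarrow>
      closing_pos (\<lambda>w. B (rev w)) (rev W) (L - x) \<le> L - y"
    using closing_pos_rev_galois[OF B] by (simp add: L_def)
  note interleave = leapfrog_galois_interleave[OF galois c_last[unfolded c_def] c_inc[unfolded c_def],
      folded c_def e_def]
  have e_last: "e N = L"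
    using interleave[of N] by (simp add: c_def)
  have "e k < e (Suc k)" if "k \<le> N" for k
  proof (cases "k = N")
    case True
    obtain m where m: "N = Suc m"
      using False not0_implies_Suc by blast
    have "L < closing_pos (\<lambda>w. B (rev w)) (rev W) 0 + e m" "e m \<le> L"
      using interleave[of m] m by (simp_all add: c_def numeral_2_eq_2)
    then have "\<not> closing_pos B W (e m) \<le> L"
      using galois[of L "e m"] by simp
    then show ?thesis
      using True m e_last by (simp add: e_def)
  next
    case False
    then show ?thesis
      using interleave[of k] interleave[of "Suc k"] that by simp
  qed
  then show ?thesis
    unfolding amb_word_def using False e_last by (simp add: e_def L_def)
qed

lemma leapfrog_slice:
  assumes B: "superword_closed B" and "\<alpha> \<le> \<beta>" "\<beta> \<le> length W"
    and X: "amb_word B (slice W \<alpha> \<beta>) N"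
  shows "leapfrog (closing_pos B W) \<alpha> (Suc \<alpha>) N = \<beta>"
    and "0 < N \<Longrightarrow> leapfrog (closing_pos B W) \<alpha> (Suc \<alpha>) (N - 1) < \<beta>"
proof -
  define X where "X = slice W \<alpha> \<beta>"
  define s where "s = cuts B X"
  define t where "t = leapfrog (closing_pos B W) \<alpha> (Suc \<alpha>)"
  have "t N = \<beta> \<and> (0 < N \<longrightarrow> t (N - 1) < \<beta>)"
  proof (cases "N = 0")
    case True
    then have "length (slice W \<alpha> \<beta>) = 0"
      using X by (simp add: amb_word_def)
    then have "\<beta> = \<alpha>"
      using assms(2,3) by (simp add: length_slice)
    then show ?thesis using True by (simp add: t_def)
  next
    case False
    have len: "length X = \<beta> - \<alpha>"
      using assms(2,3) by (simp add: X_def length_slice)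
    have s_last: "s N = \<beta> - \<alpha>" and s_inc: "\<And>k. k \<le> N \<Longrightarrow> s k < s (Suc k)"
      and s_bounded: "\<And>k. k \<le> N \<Longrightarrow> s k \<le> \<beta> - \<alpha>"
      using amb_word_cuts[OF X[folded X_def]] False len by (simp_all add: s_def)
    have shifted: "k \<le> N \<Longrightarrow> t k = \<alpha> + s k" for k
    proof (induction k rule: nat_induct2)
      case (step k)
      have "closing_pos B X (s k) \<le> \<beta> - \<alpha>"
        using s_bounded[of "k + 2"] step.prems by (simp add: s_def)
      then have "closing_pos B W (\<alpha> + s k) = \<alpha> + closing_pos B X (s k)"
        using closing_pos_slice[OF B assms(2,3) s_bounded[of k]] step.prems
        by (simp add: X_def)
      then show ?case
        using step by (simp add: s_def t_def)
    qed (simp_all add: s_def t_def)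
    show ?thesis
      using shifted[of N] shifted[of "N - 1"] s_last s_inc[of "N - 1"] False assms(2) by simp
  qed
  then show "t N = \<beta>" "0 < N \<Longrightarrow> t (N - 1) < \<beta>" by simp_all
qed

lemma cuts_amb_word_prefix:
  assumes "superword_closed B" "amb_word B x N"
  shows "cuts B (x @ z) N = length x"
  using leapfrog_slice(1)[of B 0 "length x" "x @ z" N] assms by (simp add: slice_0)

text \<open>If the \<open>x\<close>-part does not start at \<open>0\<close>, then by monotonicity of the closing position the
  cut points of \<open>W\<close> run weakly ahead of those of \<open>x\<close> and then of \<open>y\<close>; for even \<open>Nx\<close> this
  makes them miss the end of \<open>W\<close>.\<close>

lemma amb_word_slices_odd:
  assumes B: "superword_closed B" and W: "amb_word B W (Nx + Ny)"
    and pos: "0 < \<alpha>" "\<alpha> \<le> \<beta>" "\<beta> \<le> \<gamma>" "\<gamma> \<le> \<delta>" "\<delta> \<le> length W"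
    and x: "amb_word B (slice W \<alpha> \<beta>) Nx" and y: "amb_word B (slice W \<gamma> \<delta>) Ny"
  shows "odd Nx"
proof (rule ccontr)
  assume "\<not> odd Nx"
  then obtain t where t: "Nx = 2 * t"
    by blast
  define f where "f = closing_pos B W"
  have f: "mono f"
    unfolding f_def using mono_closing_pos[OF B] .
  have "0 < Nx + Ny"
    using W pos by (auto simp: amb_word_def)
  note W_cuts = amb_word_cuts[OF W this]
  have W_beyond: "length W < cuts B W (Suc (Nx + Ny))"
    using W_cuts(1) W_cuts(2)[of "Nx + Ny"] by simp
  have x_end: "leapfrog f \<alpha> (Suc \<alpha>) Nx = \<beta>"
    and y_end: "leapfrog f \<gamma> (Suc \<gamma>) Ny = \<delta>"
    and y_before: "0 < Ny \<Longrightarrow> leapfrog f \<gamma> (Suc \<gamma>) (Ny - 1) < \<delta>"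
    using leapfrog_slice[OF B _ _ x] leapfrog_slice[OF B _ _ y] pos by (simp_all add: f_def)
  have "leapfrog f 0 1 1 \<le> leapfrog f \<alpha> (Suc \<alpha>) 0"
    using pos(1) by (simp add: Suc_leI)
  then have "leapfrog f 0 1 (1 + 2 * t) \<le> leapfrog f \<alpha> (Suc \<alpha>) (0 + 2 * t)"
    by (rule leapfrog_shift_mono[OF f])
  then have ahead: "leapfrog f 0 1 (Suc Nx) \<le> leapfrog f \<gamma> (Suc \<gamma>) 0"
    using t x_end pos(3) by simp
  obtain s where s: "Ny = 2 * s \<or> Ny = 2 * s + 1"
    by (metis oddE evenE)
  have "leapfrog f 0 1 (Suc Nx + 2 * s) \<le> leapfrog f \<gamma> (Suc \<gamma>) (0 + 2 * s)"
    by (rule leapfrog_shift_mono[OF f ahead])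
  then show False
    using s y_end y_before W_cuts(1) W_beyond pos(5) by (auto simp: f_def)
qed

lemma amb_word_split_even:
  assumes B: "superword_closed B"
    and W: "amb_word B (u @ x @ v @ y @ w) (Nx + Ny)"
    and x: "amb_word B x Nx" and y: "amb_word B y Ny" and "even Nx"
  shows "u = []"
proof (rule ccontr)
  assume "u \<noteq> []"
  define W \<alpha> \<gamma> where "W = u @ x @ v @ y @ w" and "\<alpha> = length u"
    and "\<gamma> = length (u @ x @ v)"
  have "slice W \<alpha> (\<alpha> + length x) = x" "slice W \<gamma> (\<gamma> + length y) = y"
    by (simp_all add: slice_def W_def \<alpha>_def \<gamma>_def)
  then have "odd Nx"
    using amb_word_slices_odd[OF B W[folded W_def], of \<alpha> "\<alpha> + length x" \<gamma> "\<gamma> + length y"]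
      x y \<open>u \<noteq> []\<close> by (simp add: W_def \<alpha>_def \<gamma>_def)
  then show False
    using \<open>even Nx\<close> by simp
qed

section \<open>Paths\<close>

definition wf_quiver :: "('v, 'a) quiver \<Rightarrow> bool" where
  "wf_quiver Q \<longleftrightarrow> (\<forall>\<alpha>\<in>arrs Q. qs Q \<alpha> \<in> verts Q \<and> qt Q \<alpha> \<in> verts Q)"

lemma wf_quiver_if_monomial_alg: "monomial_alg Q R \<Longrightarrow> wf_quiver Q"
  by (simp add: monomial_alg_def wf_quiver_def)

lemma is_path_Nil [simp]: "is_path Q (v, []) \<longleftrightarrow> v \<in> verts Q"
  by (simp add: is_path_def)

lemma is_path_Cons:
  assumes "wf_quiver Q"
  shows "is_path Q (v, \<alpha> # u) \<longleftrightarrow> \<alpha> \<in> arrs Q \<and> qs Q \<alpha> = v \<and> is_path Q (qt Q \<alpha>, u)"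
  using assms unfolding is_path_def wf_quiver_def
  by (auto simp: nth_Cons hd_conv_nth split: nat.splits)

lemma ptgt_Cons: "ptgt Q (v, \<alpha> # u) = ptgt Q (qt Q \<alpha>, u)"
  by (simp add: ptgt_def)

lemma is_path_append:
  assumes "wf_quiver Q"
  shows "is_path Q (v, u @ w) \<longleftrightarrow> is_path Q (v, u) \<and> is_path Q (ptgt Q (v, u), w)"
proof (induction u arbitrary: v)
  case Nil
  then show ?case by (auto simp: ptgt_def is_path_def)
next
  case (Cons \<alpha> u)
  then show ?case
    using is_path_Cons[OF assms] by (simp add: ptgt_Cons)
qed

lemma is_path_pcat:
  assumes "wf_quiver Q" "is_path Q x" "is_path Q r" "ptgt Q r = psrc x"
  shows "is_path Q (pcat x r)"
  using is_path_append[OF assms(1), of "fst r" "snd r" "snd x"] assms(2-4)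
  by (simp add: pcat_def psrc_def)

lemma ptgt_pcat: "ptgt Q r = psrc x \<Longrightarrow> ptgt Q (pcat x r) = ptgt Q x"
  by (auto simp: ptgt_def pcat_def psrc_def)

lemma path_eqI:
  "is_path Q x \<Longrightarrow> is_path Q y \<Longrightarrow> snd x = snd y \<Longrightarrow> ptgt Q x = ptgt Q y \<Longrightarrow> x = y"
  unfolding is_path_def ptgt_def by (cases "snd x = []") (auto simp: prod_eq_iff)

lemma path_eq_if_arrows_eq:
  "is_path Q x \<Longrightarrow> is_path Q y \<Longrightarrow> snd x = snd y \<Longrightarrow> snd x \<noteq> [] \<Longrightarrow> x = y"
  unfolding is_path_def by (auto simp: prod_eq_iff)

lemma decomp_word: "decomp Q p xs \<Longrightarrow> p = (fst (last xs), concat (map snd (rev xs)))"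
  by (induction Q p xs rule: decomp.induct) (auto simp: pcat_def)

lemma decomp_ptgt: "decomp Q p xs \<Longrightarrow> ptgt Q p = ptgt Q (hd xs)"
  by (induction Q p xs rule: decomp.induct) (auto simp: ptgt_pcat)

lemma decomp_Cons:
  "zs \<noteq> [] \<Longrightarrow> decomp Q p (x # zs) \<longleftrightarrow>
     (\<exists>r. decomp Q r zs \<and> is_path Q x \<and> ptgt Q r = psrc x \<and> p = pcat x r)"
  by (cases zs) auto

lemma decomp_is_path:
  "wf_quiver Q \<Longrightarrow> decomp Q p xs \<Longrightarrow> is_path Q p \<and> (\<forall>x\<in>set xs. is_path Q x)"
proof (induction Q p xs rule: decomp.induct)
  case (3 Q p x y rest)
  then obtain r where "decomp Q r (y # rest)" "is_path Q x" "ptgt Q r = psrc x" "p = pcat x r"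
    by auto
  then show ?case
    using "3.IH" "3.prems"(1) is_path_pcat by fastforce
qed simp_all

lemma decomp_connected:
  "decomp Q p xs \<Longrightarrow> Suc k < length xs \<Longrightarrow> ptgt Q (xs ! Suc k) = psrc (xs ! k)"
proof (induction Q p xs arbitrary: k rule: decomp.induct)
  case (3 Q p x y rest)
  then obtain r where r: "decomp Q r (y # rest)" "ptgt Q r = psrc x"
    by auto
  show ?case
  proof (cases k)
    case 0
    then show ?thesis using r decomp_ptgt[OF r(1)] by simp
  next
    case (Suc m)
    then show ?thesis using "3.IH"[OF r(1)] "3.prems" by simp
  qed
qed simp_all

lemma decomp_append:
  assumes "xs \<noteq> []" "ys \<noteq> []"
  shows "decomp Q p (xs @ ys) \<longleftrightarrow>
    (\<exists>q r. decomp Q q xs \<and> decomp Q r ys \<and> ptgt Q r = psrc q \<and> p = pcat q r)"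
  using assms(1)
proof (induction xs arbitrary: p)
  case (Cons x xs)
  show ?case
  proof (cases "xs = []")
    case True
    then show ?thesis
      using decomp_Cons[OF assms(2)] by auto
  next
    case False
    have assoc: "pcat x (pcat q r) = pcat (pcat x q) r" for q r
      by (simp add: pcat_def)
    have src: "psrc (pcat x q) = psrc q" for q
      by (simp add: psrc_def pcat_def)
    have "decomp Q p (x # xs @ ys) \<longleftrightarrow>
        (\<exists>r. decomp Q r (xs @ ys) \<and> is_path Q x \<and> ptgt Q r = psrc x \<and> p = pcat x r)"
      using decomp_Cons[of "xs @ ys"] assms(2) by simp
    also have "\<dots> \<longleftrightarrow> (\<exists>q r. decomp Q q (x # xs) \<and> decomp Q r ys \<and> ptgt Q r = psrc q \<and> p = pcat q r)"
      unfolding Cons.IH[OF False] decomp_Cons[OF False]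
      using assoc src ptgt_pcat by metis
    finally show ?thesis by simp
  qed
qed simp

lemma decomp_split:
  assumes "wf_quiver Q" "is_path Q p" "snd p = u @ w"
  shows "decomp Q p [(ptgt Q (fst p, u), w), (fst p, u)]"
proof -
  have "is_path Q (fst p, u @ w)"
    using assms(2,3) by (metis prod.collapse)
  then show ?thesis
    using is_path_append[OF assms(1), of "fst p" u w] assms(3)
    by (simp add: pcat_def psrc_def prod_eq_iff)
qed

lemma path_factorization:
  assumes wf: "wf_quiver Q"
  shows "is_path Q p \<Longrightarrow> snd p = concat ws \<Longrightarrow> ws \<noteq> [] \<Longrightarrow>
    \<exists>vs. map snd vs = ws \<and> decomp Q p (rev vs)"
proof (induction ws arbitrary: p)
  case (Cons w ws)
  show ?case
  proof (cases "ws = []")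
    case True
    then show ?thesis
      using Cons.prems by (intro exI[of _ "[p]"]) simp
  next
    case False
    define x where "x = (fst p, w)"
    define y where "y = (ptgt Q x, concat ws)"
    have split: "decomp Q p [y, x]"
      using decomp_split[OF wf Cons.prems(1), of w "concat ws"] Cons.prems(2)
      by (simp add: x_def y_def)
    then obtain vs where vs: "map snd vs = ws" "decomp Q y (rev vs)"
      using Cons.IH[of y] False by (auto simp: y_def)
    have "vs \<noteq> []"
      using vs(1) False by auto
    moreover have "\<exists>q r. decomp Q q (rev vs) \<and> decomp Q r [x] \<and> ptgt Q r = psrc q \<and> p = pcat q r"
      using split vs(2) by (intro exI[of _ y] exI[of _ x]) simp
    ultimately have "decomp Q p (rev vs @ [x])"
      using decomp_append[of "rev vs" "[x]" Q p] by simp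
    then show ?thesis
      using vs(1) by (intro exI[of _ "x # vs"]) (simp add: x_def)
  qed
qed simp

lemma decomp_trivial_start:
  assumes "wf_quiver Q" "xs \<noteq> []" "decomp Q p xs"
  shows "decomp Q p (xs @ [(fst p, [])])"
proof -
  have "fst p \<in> verts Q"
    using decomp_is_path[OF assms(1,3)] by (simp add: is_path_def)
  moreover have "ptgt Q (fst p, []) = psrc p" "p = pcat p (fst p, [])"
    by (simp_all add: ptgt_def psrc_def pcat_def)
  ultimately have "\<exists>q r. decomp Q q xs \<and> decomp Q r [(fst p, [])] \<and> ptgt Q r = psrc q \<and> p = pcat q r"
    using assms(3) by (intro exI[of _ p] exI[of _ "(fst p, [])"]) simp
  then show ?thesis
    using decomp_append[of xs "[(fst p, [])]" Q p] assms(2) by simp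
qed

lemma decomp_appendD:
  assumes "decomp Q p (xs @ ys)"
  shows "xs \<noteq> [] \<Longrightarrow> \<exists>q. decomp Q q xs" and "ys \<noteq> [] \<Longrightarrow> \<exists>r. decomp Q r ys"
proof -
  show "\<exists>q. decomp Q q xs" if "xs \<noteq> []"
  proof (cases "ys = []")
    case True
    then show ?thesis using assms by (intro exI[of _ p]) simp
  next
    case False
    then show ?thesis using assms decomp_append[OF that False] by blast
  qed
  show "\<exists>r. decomp Q r ys" if "ys \<noteq> []"
  proof (cases "xs = []")
    case True
    then show ?thesis using assms by (intro exI[of _ p]) simp
  next
    case False
    then show ?thesis using assms decomp_append[OF False that] by blast
  qed
qed

lemma decomp_connected_rev:
  assumes "decomp Q p (rev vs @ ys)" "Suc i < length vs"
  shows "ptgt Q (vs ! i) = psrc (vs ! Suc i)"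
proof -
  define k where "k = length vs - Suc (Suc i)"
  have "k < length vs" "Suc k < length vs"
    using assms(2) by (simp_all add: k_def)
  then have "(rev vs @ ys) ! Suc k = vs ! i" "(rev vs @ ys) ! k = vs ! Suc i"
    using assms(2) by (simp_all add: k_def nth_append rev_nth Suc_diff_Suc)
  then show ?thesis
    using decomp_connected[OF assms(1), of k] assms(2) by (simp add: k_def)
qed

section \<open>From paths to words\<close>

definition contains_rel :: "('v, 'a) path set \<Rightarrow> 'a list \<Rightarrow> bool" where
  "contains_rel R w \<longleftrightarrow> (\<exists>r\<in>R. \<exists>u v. w = u @ snd r @ v)"

lemma superword_closed_contains_rel:
  assumes "monomial_alg Q R"
  shows "superword_closed (contains_rel R)"
proof -
  have "\<not> contains_rel R []"
    using assms by (fastforce simp: contains_rel_def monomial_alg_def)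
  moreover have "contains_rel R (u @ x @ v)" if "contains_rel R x" for u x v
    using that unfolding contains_rel_def by (metis append.assoc)
  ultimately show ?thesis
    unfolding superword_closed_def by blast
qed

lemma in_I_iff:
  assumes mon: "monomial_alg Q R"
  shows "in_I Q R p \<longleftrightarrow> is_path Q p \<and> contains_rel R (snd p)"
proof
  assume "in_I Q R p"
  then obtain r a b where "r \<in> R" "decomp Q p [b, r, a]" "is_path Q p"
    unfolding in_I_def divisor_def by blast
  then show "is_path Q p \<and> contains_rel R (snd p)"
    using decomp_word[of Q p "[b, r, a]"] unfolding contains_rel_def by auto
next
  assume "is_path Q p \<and> contains_rel R (snd p)"
  then obtain r u v where p: "is_path Q p" and r: "r \<in> R" "snd p = u @ snd r @ v"
    unfolding contains_rel_def by blast
  have wf: "wf_quiver Q"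
    using wf_quiver_if_monomial_alg[OF mon] .
  have r_path: "is_path Q r" and "snd r \<noteq> []"
    using mon r(1) unfolding monomial_alg_def by fastforce+
  define a where "a = (fst p, u)"
  define y where "y = (ptgt Q a, snd r @ v)"
  have split_a: "decomp Q p [y, a]"
    using decomp_split[OF wf p r(2)] by (simp add: a_def y_def)
  then have "is_path Q y"
    by simp
  moreover have "snd y = snd r @ v"
    by (simp add: y_def)
  ultimately have "decomp Q y [(ptgt Q (fst y, snd r), v), (fst y, snd r)]"
    by (rule decomp_split[OF wf])
  moreover have "(fst y, snd r) = r"
    using path_eq_if_arrows_eq[OF _ r_path] calculation \<open>snd r \<noteq> []\<close> by auto
  ultimately have "decomp Q y [(ptgt Q r, v), r]"
    by simp
  then have "\<exists>q s. decomp Q q [(ptgt Q r, v), r] \<and> decomp Q s [a] \<and> ptgt Q s = psrc q \<and> p = pcat q s"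
    using split_a by (intro exI[of _ y] exI[of _ a]) auto
  then have "decomp Q p [(ptgt Q r, v), r, a]"
    using decomp_append[of "[(ptgt Q r, v), r]" "[a]" Q p] by simp
  then show "in_I Q R p"
    unfolding in_I_def divisor_def using p r(1) by blast
qed

lemma not_contains_rel_take:
  assumes mon: "monomial_alg Q R" and X: "is_path Q X"
    and minimal: "\<forall>q. prefix Q q X \<and> q \<noteq> X \<longrightarrow> \<not> in_I Q R q"
    and "z < length (snd X)"
  shows "\<not> contains_rel R (take z (snd X))"
proof -
  define q where "q = (fst X, take z (snd X))"
  have dec: "decomp Q X [(ptgt Q q, drop z (snd X)), q]"
    using decomp_split[OF wf_quiver_if_monomial_alg[OF mon] X, of "take z (snd X)" "drop z (snd X)"]
    by (simp add: q_def)
  have "length (snd q) \<noteq> length (snd X)"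
    using assms(4) by (simp add: q_def)
  then have "q \<noteq> X"
    by auto
  moreover have "prefix Q q X"
    using dec unfolding prefix_def by blast
  ultimately have "\<not> in_I Q R q"
    using minimal by blast
  moreover have "is_path Q q"
    using dec by simp
  ultimately show ?thesis
    using in_I_iff[OF mon] by (simp add: q_def)
qed

lemma not_in_I_proper_prefix:
  assumes mon: "monomial_alg Q R"
    and minimal: "\<forall>z < length (snd X). \<not> contains_rel R (take z (snd X))"
    and "prefix Q q X" "q \<noteq> X"
  shows "\<not> in_I Q R q"
proof -
  obtain b where "decomp Q X [b, q]"
    using assms(3) unfolding prefix_def by blast
  then have "X = pcat b q"
    by simp
  then have "snd X = snd q @ snd b" "snd b \<noteq> []"
    using assms(4) by (auto simp: pcat_def prod_eq_iff)
  then have "\<not> contains_rel R (snd q)"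
    using minimal[rule_format, of "length (snd q)"] by simp
  then show ?thesis
    using in_I_iff[OF mon] by simp
qed

lemma not_contains_rel_suffix:
  assumes mon: "monomial_alg Q R" and X: "is_path Q X"
    and minimal: "\<forall>q. suffix Q q X \<and> q \<noteq> X \<longrightarrow> \<not> in_I Q R q"
    and "z < length (snd X)"
  shows "\<not> contains_rel R (rev (take z (rev (snd X))))"
proof -
  define k where "k = length (snd X) - z"
  define q where "q = (ptgt Q (fst X, take k (snd X)), drop k (snd X))"
  have dec: "decomp Q X [q, (fst X, take k (snd X))]"
    using decomp_split[OF wf_quiver_if_monomial_alg[OF mon] X, of "take k (snd X)" "drop k (snd X)"]
    by (simp add: q_def)
  have "length (snd q) \<noteq> length (snd X)"
    using assms(4) by (simp add: q_def k_def)
  then have "q \<noteq> X"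
    by auto
  moreover have "suffix Q q X"
    using dec unfolding suffix_def by blast
  ultimately have "\<not> in_I Q R q"
    using minimal by blast
  moreover have "is_path Q q"
    using dec by simp
  ultimately show ?thesis
    using in_I_iff[OF mon] by (simp add: q_def k_def take_rev)
qed

lemma right_dec_factorization:
  assumes mon: "monomial_alg Q R" and dec: "right_dec Q R n p w vs"
  shows "amb_factorization (contains_rel R) (map snd vs)"
    and "snd p = concat (map snd vs)" and "w = fst p" and "length vs = nat (n + 1)"
proof -
  have "decomp Q p (rev vs @ [(w, [])])"
    using dec by (simp add: right_dec_def)
  from decomp_word[OF this] show "snd p = concat (map snd vs)" "w = fst p"
    by simp_all
  show "length vs = nat (n + 1)"
    using dec by (simp add: right_dec_def)
  show "amb_factorization (contains_rel R) (map snd vs)"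
    unfolding amb_factorization_def
  proof (intro conjI allI impI)
    show "length (map snd vs ! 0) = 1" if "map snd vs \<noteq> []"
      using dec that by (cases vs) (auto simp: right_dec_def)
    show "\<forall>v\<in>set (map snd vs). \<not> contains_rel R v"
      using dec in_I_iff[OF mon] by (auto simp: right_dec_def Bset_def)
    fix k assume k: "Suc k < length (map snd vs)"
    define X where "X = pcat (vs ! Suc k) (vs ! k)"
    have X: "snd X = map snd vs ! k @ map snd vs ! Suc k"
      using k by (simp add: X_def pcat_def)
    have "in_I Q R X" and minimal: "\<forall>q. prefix Q q X \<and> q \<noteq> X \<longrightarrow> \<not> in_I Q R q"
      using dec k by (simp_all add: right_dec_def X_def)
    then show "contains_rel R (map snd vs ! k @ map snd vs ! Suc k)"
      using in_I_iff[OF mon] X by simp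
    show "\<not> contains_rel R (take z (map snd vs ! k @ map snd vs ! Suc k))"
      if "z < length (map snd vs ! k @ map snd vs ! Suc k)" for z
      using not_contains_rel_take[OF mon _ minimal, of z] \<open>in_I Q R X\<close> that X
      by (simp add: in_I_def)
  qed
qed

lemma left_dec_factorization:
  assumes mon: "monomial_alg Q R" and dec: "left_dec Q R n p w us"
  shows "amb_factorization (\<lambda>x. contains_rel R (rev x)) (map (\<lambda>u. rev (snd u)) us)"
    and "rev (snd p) = concat (map (\<lambda>u. rev (snd u)) us)" and "w = ptgt Q p"
    and "length us = nat (n + 1)"
proof -
  have d: "decomp Q p ((w, []) # us)"
    using dec by (simp add: left_dec_def)
  from decomp_word[OF d] show "rev (snd p) = concat (map (\<lambda>u. rev (snd u)) us)"
    by (simp add: rev_concat rev_map comp_def)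
  from decomp_ptgt[OF d] show "w = ptgt Q p"
    by (simp add: ptgt_def)
  show "length us = nat (n + 1)"
    using dec by (simp add: left_dec_def)
  show "amb_factorization (\<lambda>x. contains_rel R (rev x)) (map (\<lambda>u. rev (snd u)) us)"
    unfolding amb_factorization_def
  proof (intro conjI allI impI)
    show "length (map (\<lambda>u. rev (snd u)) us ! 0) = 1" if "map (\<lambda>u. rev (snd u)) us \<noteq> []"
      using dec that by (cases us) (auto simp: left_dec_def)
    show "\<forall>v\<in>set (map (\<lambda>u. rev (snd u)) us). \<not> contains_rel R (rev v)"
      using dec in_I_iff[OF mon] by (auto simp: left_dec_def Bset_def)
    fix k assume k: "Suc k < length (map (\<lambda>u. rev (snd u)) us)"
    define X where "X = pcat (us ! k) (us ! Suc k)"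
    have X: "rev (snd X) = map (\<lambda>u. rev (snd u)) us ! k @ map (\<lambda>u. rev (snd u)) us ! Suc k"
      using k by (simp add: X_def pcat_def)
    have "in_I Q R X" and minimal: "\<forall>q. suffix Q q X \<and> q \<noteq> X \<longrightarrow> \<not> in_I Q R q"
      using dec k by (simp_all add: left_dec_def X_def)
    then show "contains_rel R (rev (map (\<lambda>u. rev (snd u)) us ! k @ map (\<lambda>u. rev (snd u)) us ! Suc k))"
      using in_I_iff[OF mon] X by (metis rev_rev_ident)
    show "\<not> contains_rel R (rev (take z (map (\<lambda>u. rev (snd u)) us ! k @ map (\<lambda>u. rev (snd u)) us ! Suc k)))"
      if "z < length (map (\<lambda>u. rev (snd u)) us ! k @ map (\<lambda>u. rev (snd u)) us ! Suc k)" for z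
    proof -
      have "z < length (snd X)"
        using that X by (metis length_rev)
      then show ?thesis
        unfolding X[symmetric]
        using not_contains_rel_suffix[OF mon _ minimal] \<open>in_I Q R X\<close> by (simp add: in_I_def)
    qed
  qed
qed

lemma right_dec_of_factorization:
  assumes mon: "monomial_alg Q R" and n: "-1 \<le> n" "length vs = nat (n + 1)"
    and dec: "decomp Q p (rev vs @ [(w, [])])"
    and fac: "amb_factorization (contains_rel R) (map snd vs)"
  shows "right_dec Q R n p w vs"
proof -
  have wf: "wf_quiver Q"
    using wf_quiver_if_monomial_alg[OF mon] .
  have paths: "\<forall>v\<in>set vs. is_path Q v"
    using decomp_is_path[OF wf dec] by simp
  have "vs \<noteq> [] \<longrightarrow> length (snd (vs ! 0)) = 1"
    using fac by (cases vs) (auto simp: amb_factorization_def)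
  moreover have "\<forall>v\<in>set vs. v \<in> Bset Q R"
    using fac paths in_I_iff[OF mon] by (auto simp: amb_factorization_def Bset_def)
  moreover have "in_I Q R (pcat (vs ! Suc i) (vs ! i)) \<and>
      (\<forall>q. prefix Q q (pcat (vs ! Suc i) (vs ! i)) \<and> q \<noteq> pcat (vs ! Suc i) (vs ! i)
         \<longrightarrow> \<not> in_I Q R q)" if i: "Suc i < length vs" for i
  proof
    define X where "X = pcat (vs ! Suc i) (vs ! i)"
    have X: "snd X = map snd vs ! i @ map snd vs ! Suc i"
      using i by (simp add: X_def pcat_def)
    have minimal: "\<forall>z < length (snd X). \<not> contains_rel R (take z (snd X))"
      using fac i unfolding X amb_factorization_def length_map by blast
    have "is_path Q X"
      unfolding X_def using is_path_pcat[OF wf] paths decomp_connected_rev[OF dec i] i by simp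
    then show "in_I Q R X"
      using in_I_iff[OF mon] X fac i by (simp add: amb_factorization_def)
    show "\<forall>q. prefix Q q X \<and> q \<noteq> X \<longrightarrow> \<not> in_I Q R q"
      using not_in_I_proper_prefix[OF mon minimal] by blast
  qed
  ultimately show ?thesis
    unfolding right_dec_def using n dec by blast
qed

lemma Gamma_ge: "p \<in> Gamma Q R n \<Longrightarrow> -1 \<le> n"
  by (auto simp: Gamma_def left_amb_def left_dec_def)

lemma Gamma_is_path:
  assumes "monomial_alg Q R" "p \<in> Gamma Q R n"
  shows "is_path Q p"
proof -
  obtain w us where "decomp Q p ((w, []) # us)"
    using assms(2) by (auto simp: Gamma_def left_amb_def left_dec_def)
  then show ?thesis
    using decomp_is_path[OF wf_quiver_if_monomial_alg[OF assms(1)]] by blast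
qed

lemma Gamma_amb_word:
  assumes mon: "monomial_alg Q R" and "p \<in> Gamma Q R n"
  shows "amb_word (\<lambda>w. contains_rel R (rev w)) (rev (snd p)) (nat (n + 1))"
    and "amb_word (contains_rel R) (snd p) (nat (n + 1))"
proof -
  obtain w us where dec: "left_dec Q R n p w us"
    using assms(2) unfolding Gamma_def left_amb_def by blast
  have B: "superword_closed (contains_rel R)"
    using superword_closed_contains_rel[OF mon] .
  show rev: "amb_word (\<lambda>w. contains_rel R (rev w)) (rev (snd p)) (nat (n + 1))"
    using amb_word_concat[OF superword_closed_rev[OF B] left_dec_factorization(1)[OF mon dec]]
      left_dec_factorization(2,4)[OF mon dec] by simp
  show "amb_word (contains_rel R) (snd p) (nat (n + 1))"
    using amb_word_of_rev[OF B rev] .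
qed

lemma Gamma_right_amb:
  assumes mon: "monomial_alg Q R" and p: "p \<in> Gamma Q R n"
  shows "right_amb Q R n p"
proof -
  have wf: "wf_quiver Q"
    using wf_quiver_if_monomial_alg[OF mon] .
  have n: "-1 \<le> n" and path: "is_path Q p"
    using Gamma_ge[OF p] Gamma_is_path[OF mon p] .
  obtain ws where ws: "concat ws = snd p" "length ws = nat (n + 1)"
    and fac: "amb_factorization (contains_rel R) ws"
    using amb_word_factorization[OF superword_closed_contains_rel[OF mon] Gamma_amb_word(2)[OF mon p]]
    by blast
  obtain vs where vs: "map snd vs = ws" "decomp Q p (rev vs @ [(fst p, [])])"
  proof (cases "ws = []")
    case True
    then have "decomp Q p (rev [] @ [(fst p, [])])"
      using ws(1) path by (simp add: is_path_def prod_eq_iff)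
    then show ?thesis
      using that[of "[]"] True by blast
  next
    case False
    then obtain vs where vs: "map snd vs = ws" "decomp Q p (rev vs)"
      using path_factorization[OF wf path ws(1)[symmetric]] by blast
    moreover have "rev vs \<noteq> []"
      using vs(1) False by auto
    ultimately show ?thesis
      using that decomp_trivial_start[OF wf] by blast
  qed
  then have "right_dec Q R n p (fst p) vs"
    using right_dec_of_factorization[OF mon n _ vs(2)] ws(2) fac by (metis length_map)
  then show ?thesis
    unfolding right_amb_def by blast
qed

lemma pi_amb_eqI:
  assumes mon: "monomial_alg Q R" and p: "right_amb Q R n p" and i: "-1 \<le> i" "i \<le> n"
    and q: "fst q = fst p" "snd q = take (cuts (contains_rel R) (snd p) (nat (i + 1))) (snd p)"
  shows "pi_amb Q R n i p = q"
  unfolding pi_amb_def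
proof (rule the_equality)
  define m where "m = nat (i + 1)"
  have B: "superword_closed (contains_rel R)"
    using superword_closed_contains_rel[OF mon] .
  have unique: "q' = q"
    if dec: "right_dec Q R n p w vs" and d: "decomp Q q' (rev (take m vs) @ [(w, [])])" for w vs q'
  proof -
    note fac = right_dec_factorization[OF mon dec]
    have "m \<le> length (map snd vs)"
      using fac(4) i by (simp add: m_def)
    then have "take (cuts (contains_rel R) (snd p) m) (snd p) = concat (take m (map snd vs))"
      using amb_factorization_cuts[OF B fac(1)] fac(2) take_cut_pos by metis
    then show "q' = q"
      using decomp_word[OF d] fac(3) q by (simp add: m_def prod_eq_iff take_map)
  qed
  obtain w vs where dec: "right_dec Q R n p w vs"
    using p unfolding right_amb_def by blast
  then have "decomp Q p (rev (drop m vs) @ (rev (take m vs) @ [(w, [])]))"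
    by (metis append_assoc append_take_drop_id rev_append right_dec_def)
  then obtain q' where "decomp Q q' (rev (take m vs) @ [(w, [])])"
    using decomp_appendD(2) by blast
  then show "\<exists>w vs. right_dec Q R n p w vs \<and> decomp Q q (rev (take (nat (i + 1)) vs) @ [(w, [])])"
    using dec unique m_def by blast
  show "q' = q" if "\<exists>w vs. right_dec Q R n p w vs \<and> decomp Q q' (rev (take (nat (i + 1)) vs) @ [(w, [])])"
    for q'
    using that unique m_def by blast
qed

lemma sigma_eqI:
  assumes mon: "monomial_alg Q R" and p: "left_amb Q R n p" and j: "-1 \<le> j" "j \<le> n"
    and q: "is_path Q q" "ptgt Q q = ptgt Q p"
      "rev (snd q) = take (cuts (\<lambda>w. contains_rel R (rev w)) (rev (snd p)) (nat (j + 1))) (rev (snd p))"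
  shows "sigma Q R n j p = q"
  unfolding sigma_def
proof (rule the_equality)
  define m where "m = nat (j + 1)"
  have B: "superword_closed (\<lambda>w. contains_rel R (rev w))"
    using superword_closed_rev[OF superword_closed_contains_rel[OF mon]] .
  have wf: "wf_quiver Q"
    using wf_quiver_if_monomial_alg[OF mon] .
  have unique: "q' = q"
    if dec: "left_dec Q R n p w us" and d: "decomp Q q' ((w, []) # take m us)" for w us q'
  proof -
    note fac = left_dec_factorization[OF mon dec]
    have "m \<le> length (map (\<lambda>u. rev (snd u)) us)"
      using fac(4) j by (simp add: m_def)
    then have "take (cuts (\<lambda>w. contains_rel R (rev w)) (rev (snd p)) m) (rev (snd p)) =
        concat (take m (map (\<lambda>u. rev (snd u)) us))"
      using amb_factorization_cuts[OF B fac(1)] fac(2) take_cut_pos by metis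
    then have "rev (snd q') = rev (snd q)"
      using decomp_word[OF d] q(3) by (simp add: m_def rev_concat rev_map comp_def take_map)
    moreover have "ptgt Q q' = ptgt Q q"
      using decomp_ptgt[OF d] fac(3) q(2) by (simp add: ptgt_def)
    moreover have "is_path Q q'"
      using decomp_is_path[OF wf d] by simp
    ultimately show "q' = q"
      using path_eqI[OF _ q(1)] by simp
  qed
  obtain w us where dec: "left_dec Q R n p w us"
    using p unfolding left_amb_def by blast
  then have "decomp Q p (((w, []) # take m us) @ drop m us)"
    by (simp add: left_dec_def)
  then obtain q' where "decomp Q q' ((w, []) # take m us)"
    using decomp_appendD(1) by blast
  then show "\<exists>w us. left_dec Q R n p w us \<and> decomp Q q ((w, []) # take (nat (j + 1)) us)"
    using dec unique m_def by blast
  show "q' = q" if "\<exists>w us. left_dec Q R n p w us \<and> decomp Q q' ((w, []) # take (nat (j + 1)) us)"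
    for q'
    using that unique m_def by blast
qed

lemma Gamma_concat_parity:
  assumes mon: "monomial_alg Q R"
    and p: "p \<in> Gamma Q R n" and x: "x \<in> Gamma Q R i" and y: "y \<in> Gamma Q R j"
    and word: "snd p = u @ snd x @ v @ snd y @ w"
    and size: "nat (n + 1) = nat (i + 1) + nat (j + 1)"
  shows "odd i \<Longrightarrow> u = []" and "odd j \<Longrightarrow> w = []"
proof -
  have B: "superword_closed (contains_rel R)"
    using superword_closed_contains_rel[OF mon] .
  have parity: "odd i \<longleftrightarrow> even (nat (i + 1))" "odd j \<longleftrightarrow> even (nat (j + 1))"
    using Gamma_ge[OF x] Gamma_ge[OF y] by (simp_all add: even_nat_iff)
  note amb = Gamma_amb_word[OF mon]
  show "u = []" if "odd i"
    using amb_word_split_even[OF B, of u "snd x" v "snd y" w "nat (i + 1)" "nat (j + 1)"]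
      amb(2)[OF p] amb(2)[OF x] amb(2)[OF y] word size parity that by simp
  show "w = []" if "odd j"
    using amb_word_split_even[OF superword_closed_rev[OF B], of "rev w" "rev (snd y)" "rev v"
        "rev (snd x)" "rev u" "nat (j + 1)" "nat (i + 1)"]
      amb(1)[OF p] amb(1)[OF x] amb(1)[OF y] word size parity that by (simp add: add.commute)
qed

lemma pi_amb_prefix:
  assumes mon: "monomial_alg Q R" and p: "p \<in> Gamma Q R n" and q: "q \<in> Gamma Q R i"
    and "i \<le> n" "fst q = fst p" "snd p = snd q @ z"
  shows "pi_amb Q R n i p = q"
proof -
  have "cuts (contains_rel R) (snd q @ z) (nat (i + 1)) = length (snd q)"
    using cuts_amb_word_prefix[OF superword_closed_contains_rel[OF mon] Gamma_amb_word(2)[OF mon q]] .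
  then show ?thesis
    using pi_amb_eqI[OF mon Gamma_right_amb[OF mon p] Gamma_ge[OF q]] assms(4-6) by simp
qed

lemma sigma_suffix:
  assumes mon: "monomial_alg Q R" and p: "p \<in> Gamma Q R n" and q: "q \<in> Gamma Q R j"
    and "j \<le> n" "ptgt Q q = ptgt Q p" "snd p = z @ snd q"
  shows "sigma Q R n j p = q"
proof -
  have "cuts (\<lambda>w. contains_rel R (rev w)) (rev (snd q) @ rev z) (nat (j + 1)) = length (snd q)"
    using cuts_amb_word_prefix[OF superword_closed_rev[OF superword_closed_contains_rel[OF mon]]
        Gamma_amb_word(1)[OF mon q]] by simp
  moreover have "left_amb Q R n p"
    using p by (simp add: Gamma_def)
  ultimately show ?thesis
    using sigma_eqI[OF mon _ Gamma_ge[OF q] _ Gamma_is_path[OF mon q]] assms(4-6) by simp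
qed

theorem mainTheorem10:
  fixes Q :: "('v, 'a) quiver" and R :: "('v, 'a) path set"
    and n i j :: int and p a b c q1 q2 :: "('v, 'a) path"
  assumes "monomial_alg Q R"
    and "n \<ge> 0" and "i \<ge> -1" and "j \<ge> -1" and "i + j = n - 1"
    and "p \<in> Gamma Q R n"
    and "decomp Q p [c, q2, b, q1, a]"
    and "q1 \<in> Gamma Q R i" and "q2 \<in> Gamma Q R j"
  shows "(odd i \<longrightarrow> snd a = []) \<and> (odd j \<longrightarrow> snd c = []) \<and>
         (odd i \<and> odd j \<longrightarrow> q2 = sigma Q R n j p \<and> q1 = pi_amb Q R n i p)"
proof -
  note mon = assms(1)
  note dec = assms(7)
  have word: "snd p = snd a @ snd q1 @ snd b @ snd q2 @ snd c" "fst p = fst a"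
    using decomp_word[OF dec] by simp_all
  have ends: "ptgt Q q2 = psrc c" "ptgt Q a = psrc q1" "ptgt Q p = ptgt Q c"
    using decomp_connected[OF dec, of 0] decomp_connected[OF dec, of 3] decomp_ptgt[OF dec]
    by simp_all
  have "nat (n + 1) = nat (i + 1) + nat (j + 1)"
    using assms(2-5) by simp
  note trivial = Gamma_concat_parity[OF mon assms(6,8,9) word(1) this]
  have "q1 = pi_amb Q R n i p" if "odd i"
    using pi_amb_prefix[OF mon assms(6,8)] trivial(1)[OF that] word ends(2) assms(4,5)
    by (simp add: ptgt_def psrc_def)
  moreover have "q2 = sigma Q R n j p" if "odd j"
    using sigma_suffix[OF mon assms(6,9)] trivial(2)[OF that] word ends(1,3) assms(3,5)
    by (simp add: ptgt_def psrc_def)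
  ultimately show ?thesis
    using trivial by blast
qed

end
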